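(* Let $K$ be a Kleene algebra and $x,u,v\in K$. If the inequation $y\ge (x+uyv)^*$ has a least solution $N$ in $K$, then \[ (u+x+v)^*=(Nv)^*N(uN)^*. \]
   Context: A Kleene algebra is an idempotent semiring $(K,+,\cdot,0,1)$ with a unary operation $^*$ such that for all $a,b$: $aa^*+1\le a^*$, $a^*a+1\le a^*$, and for all $x$, $ax+b\le x$ implies $a^*b\le x$, and $xa+b\le x$ implies $ba^*\le x$; here $a\le b$ iff $a+b=b$. No $*$-continuity is assumed. *)

theory Defs
  imports Main
begin

text \<open>Kleene algebra (Kozen's axiomatisation, no star-continuity): an idempotent
semiring (0 need not differ from 1) with natural order x \<le> y iff x + y = y,
and a star operation satisfying the unfold and induction axioms.\<close>

class kleene_algebra = semiring_0 + monoid_mult + ord +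
  fixes star :: "'a \<Rightarrow> 'a"
  assumes add_idem: "x + x = x"
  and less_eq_def: "x \<le> y \<longleftrightarrow> x + y = y"
  and less_def: "x < y \<longleftrightarrow> x \<le> y \<and> x \<noteq> y"
  and star_unfoldl: "a * star a + 1 \<le> star a"
  and star_unfoldr: "star a * a + 1 \<le> star a"
  and star_inductl: "a * x + b \<le> x \<Longrightarrow> star a * b \<le> x"
  and star_inductr: "x * a + b \<le> x \<Longrightarrow> b * star a \<le> x"

end

theory Submission
  imports Defs
begin

(* The least solution N is a fixed point, N = (x + uNv)^*; hence N is reflexive and transitive
   and contains x and uNv. Then R = (Nv)^* N (uN)^* contains 1 and is closed under left
   multiplication by u, x and v (the crux being N (Nv)^* \<le> (Nv)^* N, by right star induction),
   so (u + x + v)^* \<le> R by star induction. Conversely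
   (u + x + v)^* is itself a solution, so N \<le> (u + x + v)^*, and R \<le> (u + x + v)^*
   because a star is closed under products. *)

lemma least_prefixpoint_is_fixpoint:
  fixes f :: "'a::order \<Rightarrow> 'a"
  assumes "mono f" and "f N \<le> N" and "\<And>y. f y \<le> y \<Longrightarrow> N \<le> y"
  shows "f N = N"
  using assms by (metis monoD order.antisym)

context kleene_algebra
begin

subclass order
proof
  fix x y z :: 'a
  show "x \<le> x"
    by (simp add: less_eq_def add_idem)
  show "x \<le> y \<Longrightarrow> y \<le> z \<Longrightarrow> x \<le> z"
    by (metis less_eq_def add.assoc)
  show antisym: "x \<le> y \<Longrightarrow> y \<le> x \<Longrightarrow> x = y"
    by (metis less_eq_def add.commute)
  show "x < y \<longleftrightarrow> x \<le> y \<and> \<not> y \<le> x"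
    using less_def antisym by blast
qed

subclass canonically_ordered_monoid_add
  by standard (metis less_eq_def add.assoc add_idem)

subclass ordered_semiring
  by standard (metis less_eq_def add.left_commute add_idem distrib_left distrib_right)+

lemma add_le_iff: "x + y \<le> z \<longleftrightarrow> x \<le> z \<and> y \<le> z"
  by (metis less_eq_def add.assoc add.commute add.left_commute add_idem)

lemma star_ref: "1 \<le> star a"
  using star_unfoldl add_le_iff by blast

lemma star_1l: "a * star a \<le> star a"
  using star_unfoldl add_le_iff by blast

lemma star_1r: "star a * a \<le> star a"
  using star_unfoldr add_le_iff by blast

lemma star_ext: "a \<le> star a"
  by (metis mult_1_right mult_left_mono star_ref star_1l order_trans zero_le)

lemma star_trans: "star a * star a \<le> star a"
  using star_inductl[of a "star a" "star a"] star_1l by (simp add: add_le_iff)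

lemma star_mult_closed: "a \<le> star c \<Longrightarrow> b \<le> star c \<Longrightarrow> a * b \<le> star c"
  using mult_mono[of a "star c" b "star c"] star_trans order_trans by simp

lemma star_le_star_iff: "star a \<le> star b \<longleftrightarrow> a \<le> star b"
proof
  assume "star a \<le> star b"
  then show "a \<le> star b"
    using star_ext order_trans by blast
next
  assume "a \<le> star b"
  then have "a * star b + 1 \<le> star b"
    using star_mult_closed star_ref by (simp add: add_le_iff)
  then show "star a \<le> star b"
    using star_inductl[of a "star b" 1] by simp
qed

lemma star_iso: "a \<le> b \<Longrightarrow> star a \<le> star b"
  using star_le_star_iff star_ext order_trans by blast

lemma star_unfoldl_eq: "1 + a * star a = star a"
proof (rule order.antisym)
  show "1 + a * star a \<le> star a"
    using star_unfoldl by (simp add: add.commute)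
  have "a \<le> a * star a" and "a * (a * star a) \<le> a * star a"
    by (metis mult_1_right mult_left_mono star_ref zero_le)
      (simp add: mult_left_mono star_1l)
  then have "a * (1 + a * star a) + 1 \<le> 1 + a * star a"
    by (simp add: distrib_left add_le_iff add_increasing add_increasing2)
  then show "star a \<le> 1 + a * star a"
    using star_inductl[of a "1 + a * star a" 1] by simp
qed

lemma mult_star_mult_le:
  assumes "1 \<le> N" and "N * N \<le> N"
  shows "N * (star (N * v) * N) \<le> star (N * v) * N"
proof -
  have "star (N * v) * N * (N * v) = star (N * v) * (N * N) * v"
    by (simp add: mult.assoc)
  also have "\<dots> \<le> star (N * v) * N * v"
    using assms(2) by (simp add: mult_left_mono mult_right_mono)
  also have "\<dots> \<le> star (N * v)"
    using star_1r by (simp add: mult.assoc)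
  also have "\<dots> \<le> star (N * v) * N"
    using mult_left_mono[OF assms(1)] by fastforce
  finally have "star (N * v) * N * (N * v) + N \<le> star (N * v) * N"
    using mult_right_mono[OF star_ref, of N] by (simp add: add_le_iff)
  then have "N * star (N * v) \<le> star (N * v) * N"
    using star_inductr by simp
  then have "N * (star (N * v) * N) \<le> star (N * v) * (N * N)"
    using mult_right_mono[of _ _ N] by (fastforce simp: mult.assoc)
  then show ?thesis
    using assms(2) by (metis mult.assoc mult_left_mono order_trans zero_le)
qed

lemma mult_star_mult_le_add:
  assumes "u * N * v \<le> N" and "N * (star (N * v) * N) \<le> star (N * v) * N"
  shows "u * (star (N * v) * N) \<le> u * N + star (N * v) * N"
proof -
  have "u * (star (N * v) * N) = u * N + (u * N * v) * (star (N * v) * N)"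
    by (metis star_unfoldl_eq distrib_left distrib_right mult_1_left mult.assoc)
  also have "\<dots> \<le> u * N + star (N * v) * N"
    using assms by (meson add_left_mono mult_right_mono order_trans zero_le)
  finally show ?thesis .
qed

lemma star_sum_le_factorization:
  assumes N_solution: "star (x + u * N * v) \<le> N" and N_trans: "N * N \<le> N"
  shows "star (u + x + v) \<le> star (N * v) * N * star (u * N)"
proof -
  define P where "P = star (N * v) * N"
  define R where "R = P * star (u * N)"
  have "1 \<le> N"
    using order_trans[OF star_ref N_solution] .
  have "x \<le> N" and "u * N * v \<le> N"
    using order_trans[OF star_ext N_solution] by (simp_all add: add_le_iff)
  have "N \<le> P"
    unfolding P_def using mult_right_mono[OF star_ref, of N] by simp
  have "1 \<le> P"
    using \<open>1 \<le> N\<close> \<open>N \<le> P\<close> by simp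
  have NP: "N * P \<le> P"
    unfolding P_def using mult_star_mult_le[OF \<open>1 \<le> N\<close> N_trans] .
  have "star (u * N) \<le> R"
    unfolding R_def using mult_right_mono[OF \<open>1 \<le> P\<close>] by fastforce
  have "u * P \<le> u * N + P"
    unfolding P_def using \<open>u * N * v \<le> N\<close> NP[unfolded P_def] by (rule mult_star_mult_le_add)
  then have "u * R \<le> u * N * star (u * N) + R"
    unfolding R_def using mult_right_mono by (fastforce simp: distrib_right mult.assoc)
  also have "\<dots> \<le> R"
    using star_1l[of "u * N"] \<open>star (u * N) \<le> R\<close> by (simp add: add_le_iff)
  finally have "u * R \<le> R" .
  have "x * R \<le> R"
    unfolding R_def using \<open>x \<le> N\<close> NP
    by (metis mult_right_mono mult.assoc order_trans zero_le)
  have "v * R \<le> R"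
  proof -
    have "v * star (N * v) \<le> N * v * star (N * v)"
      using mult_right_mono[OF \<open>1 \<le> N\<close>, of "v * star (N * v)"] by (simp add: mult.assoc)
    also have "\<dots> \<le> star (N * v)"
      by (rule star_1l)
    finally show ?thesis
      unfolding R_def P_def by (metis mult_right_mono mult.assoc zero_le)
  qed
  have "(u + x + v) * R + 1 \<le> R"
    using \<open>u * R \<le> R\<close> \<open>x * R \<le> R\<close> \<open>v * R \<le> R\<close>
      order_trans[OF star_ref \<open>star (u * N) \<le> R\<close>]
    by (simp add: distrib_right add_le_iff)
  then show ?thesis
    using star_inductl[of "u + x + v" R 1] unfolding R_def P_def by simp
qed

lemma factorization_le_star_sum:
  assumes "N \<le> star (u + x + v)"
  shows "star (N * v) * N * star (u * N) \<le> star (u + x + v)"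
proof -
  have "u \<le> star (u + x + v)" and "v \<le> star (u + x + v)"
    using star_ext[of "u + x + v"] by (simp_all add: add_le_iff)
  with assms show ?thesis
    by (simp add: star_mult_closed star_le_star_iff)
qed

lemma star_sum_solution:
  "star (x + u * star (u + x + v) * v) \<le> star (u + x + v)"
proof -
  have "u \<le> star (u + x + v)" and "x \<le> star (u + x + v)" and "v \<le> star (u + x + v)"
    using star_ext[of "u + x + v"] by (simp_all add: add_le_iff)
  then show ?thesis
    by (simp add: star_le_star_iff star_mult_closed add_le_iff)
qed

end

theorem theorem6:
  fixes x u v N :: "'a::kleene_algebra"
  assumes "star (x + u * N * v) \<le> N"
    and "\<And>y. star (x + u * y * v) \<le> y \<Longrightarrow> N \<le> y"
  shows "star (u + x + v) = star (N * v) * N * star (u * N)"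
proof -
  have "mono (\<lambda>y. star (x + u * y * v))"
    by (intro monoI star_iso add_left_mono mult_right_mono mult_left_mono) simp_all
  then have "star (x + u * N * v) = N"
    using least_prefixpoint_is_fixpoint assms by blast
  then have "N * N \<le> N"
    using star_trans by metis
  moreover have "N \<le> star (u + x + v)"
    using assms(2) star_sum_solution by blast
  ultimately show ?thesis
    using star_sum_le_factorization[OF assms(1)] factorization_le_star_sum
    by (blast intro: order.antisym)
qed

end
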